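(* Let $\Gamma$ be a green Veldkamp quadrangle with point set $P$, and let $a,b\in P$ with ${\rm dist}(a,b)=4$ such that $a$ and $b$ are not opposite. Then $a^{\rm op}=b^{\rm op}$ and $\Gamma_2(a)=\Gamma_2(b)$.
   Context: A graph is a pair $(V,E)$ with $E$ a set of $2$-element subsets of $V$; $\Gamma_v$ is the set of neighbors of $v$; $\Gamma_m(v)=\{u\mid {\rm dist}(u,v)=m\}$. An $s$-path is a sequence $(x_0,\dots,x_s)$ of vertices with consecutive vertices adjacent and $x_{i-2}\ne x_i$ for $i\in[2,s]$. A closed $s$-path is an $s$-path with $s\ge3$ whose first and last vertices coincide; an $s$-circuit is the subgraph determined by a closed $s$-path. An opposition relation on a set $X$ is a symmetric anti-reflexive relation; trivial if any two distinct elements are related; $k$-plump if for every $S\subseteq X$ with $|S|\le k$ some element of $X$ is related to all elements of $S$. A Veldkamp graph is a graph with a $2$-plump opposition relation $\equiv_v$ on $\Gamma_v$ for each vertex $v$. A path $(v_0,\dots,v_s)$ is straight if $v_{i-1}\equiv_{v_i}v_{i+1}$ for all $i\in[1,s-1]$; a circuit is straight if every path in it is straight. A Veldkamp $n$-gon ($n\ge2$) is a Veldkamp graph satisfying (VP1) connected and bipartite; (VP2) for each $k\in[1,n-1]$ each straight $k$-path is the unique straight path between its endpoints of length at most $k$; (VP3) every straight $(n+1)$-path lies in a straight $2n$-circuit. A root is a straight $n$-path; two vertices are opposite if there is a root between them; $x^{\rm op}$ is the set of vertices opposite $x$. A Veldkamp quadrangle is a Veldkamp $4$-gon, with bipartition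 classes called points $P$ and lines $L$; it is green if $\equiv_x$ is trivial for every line $x$. *)

theory Defs
  imports Main
begin

(* A graph on vertex set V given by a symmetric irreflexive adjacency relation
   (equivalently, E = {{u,v}. adj u v} is a set of 2-element subsets of V). *)
definition graph :: "'v set \<Rightarrow> ('v \<Rightarrow> 'v \<Rightarrow> bool) \<Rightarrow> bool" where
  "graph V adj \<longleftrightarrow> (\<forall>u v. adj u v \<longrightarrow> u \<in> V \<and> v \<in> V \<and> u \<noteq> v \<and> adj v u)"

definition nbhd :: "('v \<Rightarrow> 'v \<Rightarrow> bool) \<Rightarrow> 'v \<Rightarrow> 'v set" where
  "nbhd adj v = {u. adj v u}"

definition opposition_rel :: "'a set \<Rightarrow> ('a \<Rightarrow> 'a \<Rightarrow> bool) \<Rightarrow> bool" where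
  "opposition_rel X R \<longleftrightarrow> (\<forall>x y. R x y \<longrightarrow> x \<in> X \<and> y \<in> X) \<and> (\<forall>x y. R x y \<longrightarrow> R y x) \<and> (\<forall>x. \<not> R x x)"

definition trivial_rel :: "'a set \<Rightarrow> ('a \<Rightarrow> 'a \<Rightarrow> bool) \<Rightarrow> bool" where
  "trivial_rel X R \<longleftrightarrow> (\<forall>x\<in>X. \<forall>y\<in>X. x \<noteq> y \<longrightarrow> R x y)"

definition plump :: "nat \<Rightarrow> 'a set \<Rightarrow> ('a \<Rightarrow> 'a \<Rightarrow> bool) \<Rightarrow> bool" where
  "plump k X R \<longleftrightarrow> (\<forall>S. S \<subseteq> X \<and> finite S \<and> card S \<le> k \<longrightarrow> (\<exists>x\<in>X. \<forall>s\<in>S. R x s))"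

(* opp v x y  means  x \<equiv>_v y *)
definition veldkamp_graph :: "'v set \<Rightarrow> ('v \<Rightarrow> 'v \<Rightarrow> bool) \<Rightarrow> ('v \<Rightarrow> 'v \<Rightarrow> 'v \<Rightarrow> bool) \<Rightarrow> bool" where
  "veldkamp_graph V adj opp \<longleftrightarrow> graph V adj \<and>
     (\<forall>v\<in>V. opposition_rel (nbhd adj v) (opp v) \<and> plump 2 (nbhd adj v) (opp v))"

definition is_path :: "'v set \<Rightarrow> ('v \<Rightarrow> 'v \<Rightarrow> bool) \<Rightarrow> 'v list \<Rightarrow> nat \<Rightarrow> bool" where
  "is_path V adj xs s \<longleftrightarrow> length xs = Suc s \<and> set xs \<subseteq> V \<and>
     (\<forall>i<s. adj (xs ! i) (xs ! Suc i)) \<and>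
     (\<forall>i. 2 \<le> i \<and> i \<le> s \<longrightarrow> xs ! (i - 2) \<noteq> xs ! i)"

definition straight :: "('v \<Rightarrow> 'v \<Rightarrow> 'v \<Rightarrow> bool) \<Rightarrow> 'v list \<Rightarrow> bool" where
  "straight opp xs \<longleftrightarrow> (\<forall>i. 1 \<le> i \<and> Suc i < length xs \<longrightarrow> opp (xs ! i) (xs ! (i - 1)) (xs ! Suc i))"

definition closed_path :: "'v set \<Rightarrow> ('v \<Rightarrow> 'v \<Rightarrow> bool) \<Rightarrow> 'v list \<Rightarrow> nat \<Rightarrow> bool" where
  "closed_path V adj xs s \<longleftrightarrow> is_path V adj xs s \<and> 3 \<le> s \<and> hd xs = last xs"

definition circ_edges :: "'v list \<Rightarrow> 'v set set" where
  "circ_edges xs = {{xs ! i, xs ! Suc i} | i. Suc i < length xs}"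

definition path_in_circuit :: "'v set \<Rightarrow> ('v \<Rightarrow> 'v \<Rightarrow> bool) \<Rightarrow> 'v list \<Rightarrow> 'v list \<Rightarrow> bool" where
  "path_in_circuit V adj c q \<longleftrightarrow> (\<exists>s. is_path V adj q s) \<and> set q \<subseteq> set c \<and>
     (\<forall>i. Suc i < length q \<longrightarrow> {q ! i, q ! Suc i} \<in> circ_edges c)"

definition straight_circuit :: "'v set \<Rightarrow> ('v \<Rightarrow> 'v \<Rightarrow> bool) \<Rightarrow> ('v \<Rightarrow> 'v \<Rightarrow> 'v \<Rightarrow> bool) \<Rightarrow> 'v list \<Rightarrow> nat \<Rightarrow> bool" where
  "straight_circuit V adj opp c s \<longleftrightarrow> closed_path V adj c s \<and>
     (\<forall>q. path_in_circuit V adj c q \<longrightarrow> straight opp q)"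

definition walk :: "'v set \<Rightarrow> ('v \<Rightarrow> 'v \<Rightarrow> bool) \<Rightarrow> 'v list \<Rightarrow> bool" where
  "walk V adj xs \<longleftrightarrow> xs \<noteq> [] \<and> set xs \<subseteq> V \<and> (\<forall>i. Suc i < length xs \<longrightarrow> adj (xs ! i) (xs ! Suc i))"

definition connected_graph :: "'v set \<Rightarrow> ('v \<Rightarrow> 'v \<Rightarrow> bool) \<Rightarrow> bool" where
  "connected_graph V adj \<longleftrightarrow> (\<forall>u\<in>V. \<forall>v\<in>V. \<exists>xs. walk V adj xs \<and> hd xs = u \<and> last xs = v)"

definition bipartite :: "'v set \<Rightarrow> ('v \<Rightarrow> 'v \<Rightarrow> bool) \<Rightarrow> bool" where
  "bipartite V adj \<longleftrightarrow> (\<exists>c :: 'v \<Rightarrow> bool. \<forall>u v. adj u v \<longrightarrow> c u \<noteq> c v)"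

definition gdist :: "'v set \<Rightarrow> ('v \<Rightarrow> 'v \<Rightarrow> bool) \<Rightarrow> 'v \<Rightarrow> 'v \<Rightarrow> nat" where
  "gdist V adj u v = (LEAST k. \<exists>xs. walk V adj xs \<and> hd xs = u \<and> last xs = v \<and> length xs = Suc k)"

definition sphere :: "'v set \<Rightarrow> ('v \<Rightarrow> 'v \<Rightarrow> bool) \<Rightarrow> nat \<Rightarrow> 'v \<Rightarrow> 'v set" where
  "sphere V adj m v = {u \<in> V. gdist V adj u v = m}"

definition veldkamp_ngon :: "nat \<Rightarrow> 'v set \<Rightarrow> ('v \<Rightarrow> 'v \<Rightarrow> bool) \<Rightarrow> ('v \<Rightarrow> 'v \<Rightarrow> 'v \<Rightarrow> bool) \<Rightarrow> bool" where
  "veldkamp_ngon n V adj opp \<longleftrightarrow> 2 \<le> n \<and> veldkamp_graph V adj opp \<and>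
     connected_graph V adj \<and> bipartite V adj \<and>
     (\<forall>k p. 1 \<le> k \<and> k \<le> n - 1 \<and> is_path V adj p k \<and> straight opp p \<longrightarrow>
        (\<forall>q j. j \<le> k \<and> is_path V adj q j \<and> straight opp q \<and> hd q = hd p \<and> last q = last p \<longrightarrow> q = p)) \<and>
     (\<forall>p. is_path V adj p (n + 1) \<and> straight opp p \<longrightarrow>
        (\<exists>c. straight_circuit V adj opp c (2 * n) \<and> path_in_circuit V adj c p))"

definition opposite :: "nat \<Rightarrow> 'v set \<Rightarrow> ('v \<Rightarrow> 'v \<Rightarrow> bool) \<Rightarrow> ('v \<Rightarrow> 'v \<Rightarrow> 'v \<Rightarrow> bool) \<Rightarrow> 'v \<Rightarrow> 'v \<Rightarrow> bool" where
  "opposite n V adj opp x y \<longleftrightarrow> (\<exists>p. is_path V adj p n \<and> straight opp p \<and> hd p = x \<and> last p = y)"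

definition opp_set :: "nat \<Rightarrow> 'v set \<Rightarrow> ('v \<Rightarrow> 'v \<Rightarrow> bool) \<Rightarrow> ('v \<Rightarrow> 'v \<Rightarrow> 'v \<Rightarrow> bool) \<Rightarrow> 'v \<Rightarrow> 'v set" where
  "opp_set n V adj opp x = {y. opposite n V adj opp x y}"

(* green Veldkamp quadrangle with point set P (one bipartition class); lines are V - P *)
definition green_quadrangle :: "'v set \<Rightarrow> ('v \<Rightarrow> 'v \<Rightarrow> bool) \<Rightarrow> ('v \<Rightarrow> 'v \<Rightarrow> 'v \<Rightarrow> bool) \<Rightarrow> 'v set \<Rightarrow> bool" where
  "green_quadrangle V adj opp P \<longleftrightarrow> veldkamp_ngon 4 V adj opp \<and> P \<subseteq> V \<and>
     (\<forall>u v. adj u v \<longrightarrow> (u \<in> P \<longleftrightarrow> v \<notin> P)) \<and>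
     (\<forall>x\<in>V - P. trivial_rel (nbhd adj x) (opp x))"

end

theory Submission
  imports Defs
begin

(* A green quadrangle has no 4-circuits, and by (VP3) every straight 5-path closes up to a straight
   8-circuit, i.e. it returns to its start in three more steps. Let a-L-x-M-b join the points a, b.
   Closing three suitable straight 5-paths shows that every point c collinear with a is collinear
   with b, for otherwise the closings produce a root from a to b; hence Gamma_2(a) = Gamma_2(b).
   If y were opposite a but not b, the same argument for b and y would make a point on a line
   through a both opposite and collinear to y, which is impossible. *)

lemma is_path_iff_nonbacktracking:
  "is_path V adj xs s \<longleftrightarrow> length xs = Suc s \<and> set xs \<subseteq> V \<and>
     (\<forall>i<s. adj (xs ! i) (xs ! Suc i)) \<and> (\<forall>i. Suc i < s \<longrightarrow> xs ! i \<noteq> xs ! Suc (Suc i))"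
proof -
  have "(\<forall>i. 2 \<le> i \<and> i \<le> s \<longrightarrow> xs ! (i - 2) \<noteq> xs ! i) \<longleftrightarrow>
        (\<forall>i. Suc i < s \<longrightarrow> xs ! i \<noteq> xs ! Suc (Suc i))"
  proof (intro iffI allI impI)
    fix i assume "\<forall>i. 2 \<le> i \<and> i \<le> s \<longrightarrow> xs ! (i - 2) \<noteq> xs ! i" "Suc i < s"
    then show "xs ! i \<noteq> xs ! Suc (Suc i)" by (auto dest: spec[of _ "Suc (Suc i)"])
  next
    fix i assume "\<forall>i. Suc i < s \<longrightarrow> xs ! i \<noteq> xs ! Suc (Suc i)" "2 \<le> i \<and> i \<le> s"
    moreover have "i = Suc (Suc (i - 2))" using \<open>2 \<le> i \<and> i \<le> s\<close> by arith
    ultimately show "xs ! (i - 2) \<noteq> xs ! i" by (metis Suc_le_lessD)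
  qed
  then show ?thesis unfolding is_path_def by simp
qed

lemma is_path_pair [simp]: "is_path V adj [x, y] s \<longleftrightarrow> s = 1 \<and> x \<in> V \<and> y \<in> V \<and> adj x y"
  unfolding is_path_def by auto

lemma is_path_Cons_Cons_Cons [simp]:
  "is_path V adj (x # y # z # zs) s \<longleftrightarrow>
     2 \<le> s \<and> x \<in> V \<and> adj x y \<and> x \<noteq> z \<and> is_path V adj (y # z # zs) (s - 1)"
proof (cases "2 \<le> s")
  case True
  then obtain t where "s = Suc (Suc t)" by (metis add_2_eq_Suc le_add_diff_inverse)
  then show ?thesis unfolding is_path_iff_nonbacktracking by (auto simp: All_less_Suc2)
qed (auto simp: is_path_def)

lemma straight_iff:
  "straight opp xs \<longleftrightarrow> (\<forall>i. Suc (Suc i) < length xs \<longrightarrow> opp (xs ! Suc i) (xs ! i) (xs ! Suc (Suc i)))"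
proof -
  have "(\<forall>i. 1 \<le> i \<and> Suc i < length xs \<longrightarrow> opp (xs ! i) (xs ! (i - 1)) (xs ! Suc i)) \<longleftrightarrow>
        (\<forall>i. Suc (Suc i) < length xs \<longrightarrow> opp (xs ! Suc i) (xs ! i) (xs ! Suc (Suc i)))"
  proof (intro iffI allI impI)
    fix i assume "\<forall>i. 1 \<le> i \<and> Suc i < length xs \<longrightarrow> opp (xs ! i) (xs ! (i - 1)) (xs ! Suc i)"
      "Suc (Suc i) < length xs"
    then show "opp (xs ! Suc i) (xs ! i) (xs ! Suc (Suc i))" by (auto dest: spec[of _ "Suc i"])
  next
    fix i assume "\<forall>i. Suc (Suc i) < length xs \<longrightarrow> opp (xs ! Suc i) (xs ! i) (xs ! Suc (Suc i))"
      "1 \<le> i \<and> Suc i < length xs"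
    moreover have "i = Suc (i - 1)" using \<open>1 \<le> i \<and> Suc i < length xs\<close> by arith
    ultimately show "opp (xs ! i) (xs ! (i - 1)) (xs ! Suc i)" by (metis diff_Suc_1)
  qed
  then show ?thesis unfolding straight_def .
qed

lemma straight_short [simp]: "straight opp []" "straight opp [x]" "straight opp [x, y]"
  unfolding straight_iff by simp_all

lemma straight_Cons_Cons_Cons [simp]:
  "straight opp (x # y # z # zs) \<longleftrightarrow> opp y x z \<and> straight opp (y # z # zs)"
  unfolding straight_iff by (auto simp: less_Suc_eq_0_disj)

lemma walk_singleton [simp]: "walk V adj [x] \<longleftrightarrow> x \<in> V"
  unfolding walk_def by simp

lemma walk_Cons_Cons [simp]: "walk V adj (x # y # zs) \<longleftrightarrow> x \<in> V \<and> adj x y \<and> walk V adj (y # zs)"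
  unfolding walk_def by (auto simp: All_less_Suc2)

lemma circ_edges_subset_set: "e \<in> circ_edges c \<Longrightarrow> e \<subseteq> set c"
  unfolding circ_edges_def by auto

lemma path_in_circuit_2I:
  assumes "is_path V adj [x0, x1, x2] 2" "{x0, x1} \<in> circ_edges c" "{x1, x2} \<in> circ_edges c"
  shows "path_in_circuit V adj c [x0, x1, x2]"
proof -
  have "{[x0, x1, x2] ! i, [x0, x1, x2] ! Suc i} \<in> circ_edges c" if "Suc i < length [x0, x1, x2]" for i
  proof -
    have "i = 0 \<or> i = 1" using that by auto
    then show ?thesis using assms(2,3) by auto
  qed
  moreover have "set [x0, x1, x2] \<subseteq> set c"
    using circ_edges_subset_set[OF assms(2)] circ_edges_subset_set[OF assms(3)] by simp
  ultimately show ?thesis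
    unfolding path_in_circuit_def using assms(1) by blast
qed

lemma path_in_circuit_3I:
  assumes "is_path V adj [x0, x1, x2, x3] 3"
    and "{x0, x1} \<in> circ_edges c" "{x1, x2} \<in> circ_edges c" "{x2, x3} \<in> circ_edges c"
  shows "path_in_circuit V adj c [x0, x1, x2, x3]"
proof -
  have "{[x0, x1, x2, x3] ! i, [x0, x1, x2, x3] ! Suc i} \<in> circ_edges c"
    if "Suc i < length [x0, x1, x2, x3]" for i
  proof -
    have "i = 0 \<or> i = 1 \<or> i = 2" using that by auto
    then show ?thesis using assms(2-4) by auto
  qed
  moreover have "set [x0, x1, x2, x3] \<subseteq> set c"
    using circ_edges_subset_set[OF assms(2)] circ_edges_subset_set[OF assms(4)] by simp
  ultimately show ?thesis
    unfolding path_in_circuit_def using assms(1) by blast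
qed

lemma straight_circuit_8D:
  assumes "straight_circuit V adj opp c 8"
  shows "length c = 9" "c ! 8 = c ! 0" "set c \<subseteq> V" "\<forall>i<8. adj (c ! i) (c ! Suc i)"
    "\<forall>i. Suc i < 8 \<longrightarrow> c ! i \<noteq> c ! Suc (Suc i)"
    "\<And>q. path_in_circuit V adj c q \<Longrightarrow> straight opp q"
proof -
  have path: "is_path V adj c 8" and closed: "hd c = last c"
    using assms unfolding straight_circuit_def closed_path_def by auto
  then show len: "length c = 9" "set c \<subseteq> V" "\<forall>i<8. adj (c ! i) (c ! Suc i)"
    "\<forall>i. Suc i < 8 \<longrightarrow> c ! i \<noteq> c ! Suc (Suc i)"
    unfolding is_path_iff_nonbacktracking by auto
  then have "c \<noteq> []" by auto
  with len have "hd c = c ! 0" "last c = c ! 8"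
    by (simp_all add: hd_conv_nth last_conv_nth)
  with closed show "c ! 8 = c ! 0" by simp
  show "\<And>q. path_in_circuit V adj c q \<Longrightarrow> straight opp q"
    using assms unfolding straight_circuit_def by blast
qed

definition circ_nth :: "'v list \<Rightarrow> int \<Rightarrow> 'v" where
  "circ_nth c i = c ! nat (i mod 8)"

lemma circ_nth_eq_if_dvd: "8 dvd (i - j) \<Longrightarrow> circ_nth c i = circ_nth c j"
  unfolding circ_nth_def by (metis mod_eq_dvd_iff)

context
  fixes c :: "'v list"
  assumes length_c: "length c = 9" and closed_c: "c ! 8 = c ! 0"
begin

lemma circ_nth_plus_1: "circ_nth c (i + 1) = c ! Suc (nat (i mod 8))"
proof (cases "i mod 8 = 7")
  case True
  then have "(i + 1) mod 8 = 0" by presburger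
  with True closed_c show ?thesis unfolding circ_nth_def by simp
next
  case False
  then have "(i + 1) mod 8 = i mod 8 + 1" by presburger
  then show ?thesis unfolding circ_nth_def by (simp add: nat_add_distrib)
qed

lemma circ_nth_edge: "{circ_nth c i, circ_nth c (i + 1)} \<in> circ_edges c"
proof -
  have "Suc (nat (i mod 8)) < length c" using length_c by simp
  then show ?thesis unfolding circ_edges_def circ_nth_plus_1 by (auto simp: circ_nth_def)
qed

lemma set_subset_range_circ_nth: "set c \<subseteq> range (circ_nth c)"
proof
  fix x assume "x \<in> set c"
  then obtain k where "k < 9" "x = c ! k" using length_c by (auto simp: in_set_conv_nth)
  then have "x = circ_nth c (int (k mod 8))"
    using closed_c unfolding circ_nth_def by (cases "k = 8") (simp_all add: zmod_int)
  then show "x \<in> range (circ_nth c)" by blast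
qed

lemma circ_edges_circ_nth: "e \<in> circ_edges c \<Longrightarrow> \<exists>i. e = {circ_nth c i, circ_nth c (i + 1)}"
proof -
  assume "e \<in> circ_edges c"
  then obtain k where k: "e = {c ! k, c ! Suc k}" "Suc k < 9"
    using length_c unfolding circ_edges_def by auto
  then have "circ_nth c (int k) = c ! k" "circ_nth c (int k + 1) = c ! Suc k"
    unfolding circ_nth_plus_1 by (simp_all add: circ_nth_def zmod_int)
  with k show ?thesis by metis
qed

end

lemma gdist_le_walk: "walk V adj xs \<Longrightarrow> gdist V adj (hd xs) (last xs) \<le> length xs - 1"
  unfolding gdist_def walk_def by (rule Least_le) (auto intro: exI[of _ xs])

definition collinear :: "('v \<Rightarrow> 'v \<Rightarrow> bool) \<Rightarrow> 'v \<Rightarrow> 'v \<Rightarrow> bool" where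
  "collinear adj u v \<longleftrightarrow> (\<exists>T. adj u T \<and> adj T v)"

locale green_quad =
  fixes V :: "'v set" and adj :: "'v \<Rightarrow> 'v \<Rightarrow> bool" and opp :: "'v \<Rightarrow> 'v \<Rightarrow> 'v \<Rightarrow> bool"
    and P :: "'v set"
  assumes green: "green_quadrangle V adj opp P"
begin

lemma veldkamp_4gon: "veldkamp_ngon 4 V adj opp"
  using green unfolding green_quadrangle_def by blast

lemma adj_in_V: "adj u v \<Longrightarrow> u \<in> V \<and> v \<in> V"
  using veldkamp_4gon unfolding veldkamp_ngon_def veldkamp_graph_def graph_def by blast

lemma adj_sym: "adj u v \<Longrightarrow> adj v u"
  using veldkamp_4gon unfolding veldkamp_ngon_def veldkamp_graph_def graph_def by blast

lemma adj_point_iff: "adj u v \<Longrightarrow> u \<in> P \<longleftrightarrow> v \<notin> P"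
  using green unfolding green_quadrangle_def by blast

lemma points_in_V: "P \<subseteq> V"
  using green unfolding green_quadrangle_def by blast

lemma opposition_at: "v \<in> V \<Longrightarrow> opposition_rel (nbhd adj v) (opp v)"
  using veldkamp_4gon unfolding veldkamp_ngon_def veldkamp_graph_def by blast

lemma opp_adj: "v \<in> V \<Longrightarrow> opp v x y \<Longrightarrow> adj v x \<and> adj v y"
  using opposition_at unfolding opposition_rel_def nbhd_def by blast

lemma opp_sym: "v \<in> V \<Longrightarrow> opp v x y \<Longrightarrow> opp v y x"
  using opposition_at unfolding opposition_rel_def by blast

lemma opp_neq: "v \<in> V \<Longrightarrow> opp v x y \<Longrightarrow> x \<noteq> y"
  using opposition_at unfolding opposition_rel_def by blast

lemma opp_at_line: "adj v x \<Longrightarrow> adj v y \<Longrightarrow> v \<notin> P \<Longrightarrow> x \<noteq> y \<Longrightarrow> opp v x y"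
  using green adj_in_V unfolding green_quadrangle_def trivial_rel_def nbhd_def by blast

lemma ex_opp_both:
  assumes "adj v x" "adj v y"
  obtains z where "adj v z" "opp v z x" "opp v z y"
proof -
  have "v \<in> V" using adj_in_V assms by blast
  then have "plump 2 (nbhd adj v) (opp v)"
    using veldkamp_4gon unfolding veldkamp_ngon_def veldkamp_graph_def by blast
  moreover have "{x, y} \<subseteq> nbhd adj v" "card {x, y} \<le> 2"
    using assms by (auto simp: nbhd_def card_insert_if)
  ultimately show thesis
    using that unfolding plump_def nbhd_def by (metis finite.emptyI finite.insertI insertCI mem_Collect_eq)
qed

lemma straight_path_unique:
  assumes "is_path V adj p k" "straight opp p" "1 \<le> k" "k \<le> 3"
    and "is_path V adj q j" "straight opp q" "j \<le> k" "hd q = hd p" "last q = last p"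
  shows "q = p"
  using veldkamp_4gon assms unfolding veldkamp_ngon_def by (simp del: is_path_Cons_Cons_Cons) blast

lemma straight_5_path_in_circuit:
  "is_path V adj p 5 \<Longrightarrow> straight opp p \<Longrightarrow> \<exists>c. straight_circuit V adj opp c 8 \<and> path_in_circuit V adj c p"
  using veldkamp_4gon unfolding veldkamp_ngon_def by (simp del: is_path_Cons_Cons_Cons)

lemma no_4_cycle:
  assumes "adj w0 w1" "adj w1 w2" "adj w2 w3" "adj w3 w0" "w0 \<noteq> w2" "w1 \<noteq> w3"
  shows False
proof -
  have "\<not> (adj x0 x1 \<and> adj x1 x2 \<and> adj x2 x3 \<and> adj x3 x0 \<and> x0 \<noteq> x2 \<and> x1 \<noteq> x3)"
    if "x0 \<in> P" for x0 x1 x2 x3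
  proof
    assume c: "adj x0 x1 \<and> adj x1 x2 \<and> adj x2 x3 \<and> adj x3 x0 \<and> x0 \<noteq> x2 \<and> x1 \<noteq> x3"
    have "x1 \<notin> P" "x3 \<notin> P" using c that adj_point_iff by blast+
    then have "straight opp [x0, x1, x2]" "straight opp [x0, x3, x2]"
      using c opp_at_line adj_sym by auto
    moreover have "is_path V adj [x0, x1, x2] 2" "is_path V adj [x0, x3, x2] 2"
      using c adj_in_V adj_sym by auto
    ultimately have "[x0, x3, x2] = [x0, x1, x2]"
      using straight_path_unique[of "[x0, x1, x2]" 2 "[x0, x3, x2]" 2] by simp
    with c show False by simp
  qed
  from this[of w0 w1 w2 w3] this[of w1 w2 w3 w0] assms adj_point_iff show False by blast
qed

(* g lists the vertices of a straight 8-circuit with edge set E, periodically and injectively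
   modulo 8; indexing by the integers turns rotations and reflections of the circuit into
   reindexings of g. *)
definition straight_octagon :: "'v set set \<Rightarrow> (int \<Rightarrow> 'v) \<Rightarrow> bool" where
  "straight_octagon E g \<longleftrightarrow>
     (\<forall>i j. g i = g j \<longleftrightarrow> 8 dvd (i - j)) \<and> (\<forall>i. adj (g i) (g (i + 1))) \<and>
     (\<forall>i. opp (g i) (g (i - 1)) (g (i + 1))) \<and>
     (\<forall>i y. {g i, y} \<in> E \<longrightarrow> y = g (i - 1) \<or> y = g (i + 1))"

lemma straight_octagon_shift:
  assumes "straight_octagon E g" shows "straight_octagon E (\<lambda>i. g (s + i))"
  unfolding straight_octagon_def
proof (intro conjI allI impI)
  fix i j :: int and y :: 'v
  have oct: "straight_octagon E g" using assms .
  have shift: "s + (i + 1) = (s + i) + 1" "s + (i - 1) = (s + i) - 1" by simp_all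
  show "g (s + i) = g (s + j) \<longleftrightarrow> 8 dvd (i - j)"
    using oct unfolding straight_octagon_def by simp
  show "adj (g (s + i)) (g (s + (i + 1)))" "opp (g (s + i)) (g (s + (i - 1))) (g (s + (i + 1)))"
    using oct unfolding straight_octagon_def shift by blast+
  show "{g (s + i), y} \<in> E \<Longrightarrow> y = g (s + (i - 1)) \<or> y = g (s + (i + 1))"
    using oct unfolding straight_octagon_def shift by blast
qed

lemma straight_octagon_reflect:
  assumes "straight_octagon E g" shows "straight_octagon E (\<lambda>i. g (s - i))"
  unfolding straight_octagon_def
proof (intro conjI allI impI)
  fix i j :: int and y :: 'v
  have oct: "straight_octagon E g" using assms .
  have reflect: "s - (i + 1) = (s - i) - 1" "s - (i - 1) = (s - i) + 1" "(s - i) - (s - j) = j - i"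
    by simp_all
  show "g (s - i) = g (s - j) \<longleftrightarrow> 8 dvd (i - j)"
    using oct unfolding straight_octagon_def by (simp add: reflect dvd_diff_commute)
  have "adj (g (s - i - 1)) (g (s - i))" "opp (g (s - i)) (g (s - i - 1)) (g (s - i + 1))"
    using oct unfolding straight_octagon_def by (metis diff_add_cancel)+
  then show "adj (g (s - i)) (g (s - (i + 1)))" "opp (g (s - i)) (g (s - (i - 1))) (g (s - (i + 1)))"
    unfolding reflect using adj_sym adj_in_V opp_sym by blast+
  show "{g (s - i), y} \<in> E \<Longrightarrow> y = g (s - (i - 1)) \<or> y = g (s - (i + 1))"
    using oct unfolding straight_octagon_def reflect by blast
qed

lemma straight_octagon_next:
  "straight_octagon E g \<Longrightarrow> {g i, y} \<in> E \<Longrightarrow> y \<noteq> g (i - 1) \<Longrightarrow> y = g (i + 1)"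
  unfolding straight_octagon_def by blast

(* Otherwise the two halves of the circuit from c ! 1 = c ! 7 to c ! 4 are distinct straight 3-paths. *)
lemma straight_8_circuit_nth_1_neq_nth_7:
  assumes circ: "straight_circuit V adj opp c 8" shows "c ! 1 \<noteq> c ! 7"
proof
  assume wrap: "c ! 1 = c ! 7"
  have edge: "{c ! k, c ! Suc k} \<in> circ_edges c" if "k < 8" for k
    using that straight_circuit_8D(1)[OF circ] unfolding circ_edges_def by auto
  have a: "adj (c ! 1) (c ! 2)" "adj (c ! 2) (c ! 3)" "adj (c ! 3) (c ! 4)" "adj (c ! 4) (c ! 5)"
    "adj (c ! 5) (c ! 6)" "adj (c ! 6) (c ! 7)"
    using straight_circuit_8D(4)[OF circ] by (auto simp: eval_nat_numeral)
  have n: "c ! 1 \<noteq> c ! 3" "c ! 2 \<noteq> c ! 4" "c ! 3 \<noteq> c ! 5" "c ! 4 \<noteq> c ! 6" "c ! 5 \<noteq> c ! 7"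
    using straight_circuit_8D(5)[OF circ] by (auto simp: eval_nat_numeral)
  have e: "{c ! 1, c ! 2} \<in> circ_edges c" "{c ! 2, c ! 3} \<in> circ_edges c"
    "{c ! 3, c ! 4} \<in> circ_edges c" "{c ! 4, c ! 5} \<in> circ_edges c" "{c ! 5, c ! 6} \<in> circ_edges c"
    "{c ! 6, c ! 7} \<in> circ_edges c"
    using edge by (auto simp: eval_nat_numeral)
  have v: "c ! 1 \<in> V" "c ! 2 \<in> V" "c ! 3 \<in> V" "c ! 4 \<in> V" "c ! 5 \<in> V" "c ! 6 \<in> V"
    using a adj_in_V by blast+
  let ?p = "[c ! 1, c ! 2, c ! 3, c ! 4]" and ?q = "[c ! 1, c ! 6, c ! 5, c ! 4]"
  have pq: "is_path V adj ?p 3" "is_path V adj ?q 3"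
    using a n v wrap adj_sym[of "c ! 6" "c ! 7"] adj_sym[of "c ! 5" "c ! 6"] adj_sym[of "c ! 4" "c ! 5"]
    by simp_all
  moreover have "{c ! 1, c ! 6} \<in> circ_edges c" "{c ! 6, c ! 5} \<in> circ_edges c" "{c ! 5, c ! 4} \<in> circ_edges c"
    using e wrap by (simp_all add: insert_commute)
  ultimately have "straight opp ?p" "straight opp ?q"
    using pq e by (metis path_in_circuit_3I straight_circuit_8D(6)[OF circ])+
  with pq have "?q = ?p"
    using straight_path_unique[of ?p 3 ?q 3] by simp
  then show False
    using no_4_cycle[of "c ! 2" "c ! 3" "c ! 4" "c ! 5"] a n by simp
qed

lemma straight_8_circuit_circ_nth_adj:
  assumes circ: "straight_circuit V adj opp c 8" shows "adj (circ_nth c i) (circ_nth c (i + 1))"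
proof -
  have "nat (i mod 8) < 8" by simp
  then show ?thesis
    using straight_circuit_8D(4)[OF circ]
    unfolding circ_nth_plus_1[OF straight_circuit_8D(1,2)[OF circ]] by (simp add: circ_nth_def)
qed

lemma straight_8_circuit_circ_nth_neq_plus_2:
  assumes circ: "straight_circuit V adj opp c 8" shows "circ_nth c i \<noteq> circ_nth c (i + 2)"
proof -
  have nb: "c ! 0 \<noteq> c ! 2" "c ! 1 \<noteq> c ! 3" "c ! 2 \<noteq> c ! 4" "c ! 3 \<noteq> c ! 5" "c ! 4 \<noteq> c ! 6"
    "c ! 5 \<noteq> c ! 7" "c ! 6 \<noteq> c ! 8"
    using straight_circuit_8D(5)[OF circ] by (auto simp: eval_nat_numeral)
  have "i mod 8 \<in> {0..7}" by simp
  then have "i mod 8 = 0 \<or> i mod 8 = 1 \<or> i mod 8 = 2 \<or> i mod 8 = 3 \<or> i mod 8 = 4 \<or> i mod 8 = 5 \<or>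
      i mod 8 = 6 \<or> i mod 8 = 7"
    by auto
  moreover have "(i + 2) mod 8 = (i mod 8 + 2) mod 8" by (simp add: mod_add_left_eq)
  ultimately show ?thesis
    using nb straight_8_circuit_nth_1_neq_nth_7[OF circ] straight_circuit_8D(2)[OF circ]
    unfolding circ_nth_def by auto
qed

lemma straight_8_circuit_circ_nth_point_iff:
  assumes circ: "straight_circuit V adj opp c 8"
  shows "circ_nth c (i + int n) \<in> P \<longleftrightarrow> (circ_nth c i \<in> P \<longleftrightarrow> even n)"
proof (induction n)
  case (Suc n)
  have "i + int (Suc n) = (i + int n) + 1" by simp
  then show ?case
    unfolding \<open>i + int (Suc n) = (i + int n) + 1\<close>
    using Suc adj_point_iff[OF straight_8_circuit_circ_nth_adj[OF circ, of "i + int n"]] by auto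
qed simp

lemma straight_8_circuit_circ_nth_eq_iff:
  assumes circ: "straight_circuit V adj opp c 8"
  shows "circ_nth c i = circ_nth c j \<longleftrightarrow> 8 dvd (i - j)"
proof
  assume eq: "circ_nth c i = circ_nth c j"
  define d where "d = (j - i) mod 8"
  have "(i + d) mod 8 = j mod 8" unfolding d_def by (simp add: mod_add_right_eq)
  then have eq_d: "circ_nth c i = circ_nth c (i + d)"
    using eq unfolding circ_nth_def by simp
  have adj: "adj (circ_nth c k) (circ_nth c (k + 1))" for k
    using straight_8_circuit_circ_nth_adj[OF circ] .
  have nb: "circ_nth c k \<noteq> circ_nth c (k + 2)" for k
    using straight_8_circuit_circ_nth_neq_plus_2[OF circ] .
  have "d \<noteq> 1" "d \<noteq> 3" "d \<noteq> 5" "d \<noteq> 7"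
    using eq_d straight_8_circuit_circ_nth_point_iff[OF circ, of i 1]
      straight_8_circuit_circ_nth_point_iff[OF circ, of i 3]
      straight_8_circuit_circ_nth_point_iff[OF circ, of i 5]
      straight_8_circuit_circ_nth_point_iff[OF circ, of i 7]
    by auto
  moreover have "d \<noteq> 2" using eq_d nb by auto
  moreover have "d \<noteq> 4"
  proof
    assume "d = 4"
    then show False
      using no_4_cycle[OF adj[of i] adj[of "i + 1"]] adj[of "i + 2"] adj[of "i + 3"] nb[of i] nb[of "i + 1"] eq_d
      by (simp add: add.assoc)
  qed
  moreover have "d \<noteq> 6"
  proof
    assume "d = 6"
    moreover have "circ_nth c (i + 6 + 2) = circ_nth c i" by (rule circ_nth_eq_if_dvd) simp
    ultimately show False using eq_d nb[of "i + 6"] by simp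
  qed
  moreover have "0 \<le> d" "d < 8" unfolding d_def by simp_all
  ultimately have "d = 0" by presburger
  then show "8 dvd (i - j)" unfolding d_def using dvd_diff_commute mod_0_imp_dvd by blast
qed (rule circ_nth_eq_if_dvd)

lemma straight_8_circuit_octagon:
  assumes circ: "straight_circuit V adj opp c 8"
  shows "straight_octagon (circ_edges c) (circ_nth c)"
  unfolding straight_octagon_def
proof (intro conjI allI impI)
  note closed = straight_circuit_8D(1,2)[OF circ]
  fix i j :: int and y :: 'v
  show "circ_nth c i = circ_nth c j \<longleftrightarrow> 8 dvd (i - j)"
    using straight_8_circuit_circ_nth_eq_iff[OF circ] .
  show "adj (circ_nth c i) (circ_nth c (i + 1))"
    using straight_8_circuit_circ_nth_adj[OF circ] .
  have "is_path V adj [circ_nth c (i - 1), circ_nth c i, circ_nth c (i + 1)] 2"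
    using straight_8_circuit_circ_nth_adj[OF circ, of "i - 1"] straight_8_circuit_circ_nth_adj[OF circ, of i]
      straight_8_circuit_circ_nth_neq_plus_2[OF circ, of "i - 1"] adj_in_V by (simp add: add.commute)
  moreover have "{circ_nth c (i - 1), circ_nth c i} \<in> circ_edges c"
    using circ_nth_edge[OF closed, of "i - 1"] by simp
  ultimately have "path_in_circuit V adj c [circ_nth c (i - 1), circ_nth c i, circ_nth c (i + 1)]"
    using circ_nth_edge[OF closed, of i] by (rule path_in_circuit_2I)
  then show "opp (circ_nth c i) (circ_nth c (i - 1)) (circ_nth c (i + 1))"
    using straight_circuit_8D(6)[OF circ] by fastforce
  assume "{circ_nth c i, y} \<in> circ_edges c"
  then obtain m where "{circ_nth c i, y} = {circ_nth c m, circ_nth c (m + 1)}"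
    using circ_edges_circ_nth[OF closed] by blast
  then have "(8 dvd (i - m) \<and> y = circ_nth c (m + 1)) \<or> (8 dvd (i - (m + 1)) \<and> y = circ_nth c m)"
    using straight_8_circuit_circ_nth_eq_iff[OF circ] by (auto simp: doubleton_eq_iff)
  moreover have "8 dvd (i - m) \<Longrightarrow> 8 dvd ((i + 1) - (m + 1))" "8 dvd (i - (m + 1)) \<Longrightarrow> 8 dvd ((i - 1) - m)"
    by (simp_all add: algebra_simps)
  ultimately show "y = circ_nth c (i - 1) \<or> y = circ_nth c (i + 1)"
    using circ_nth_eq_if_dvd[of "i + 1" "m + 1" c] circ_nth_eq_if_dvd[of "i - 1" m c] by auto
qed

lemma straight_5_path_closes:
  assumes path: "is_path V adj [v0, v1, v2, v3, v4, v5] 5" and str: "straight opp [v0, v1, v2, v3, v4, v5]"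
  obtains u U where "adj v5 u" "adj u U" "adj U v0" "opp u v5 U" "opp v0 U v1" "u \<noteq> v4"
proof -
  obtain c where circ: "straight_circuit V adj opp c 8"
    and in_circ: "path_in_circuit V adj c [v0, v1, v2, v3, v4, v5]"
    using straight_5_path_in_circuit[OF path str] by blast
  let ?E = "circ_edges c"
  have "{[v0, v1, v2, v3, v4, v5] ! i, [v0, v1, v2, v3, v4, v5] ! Suc i} \<in> ?E" if "i < 5" for i
    using in_circ that unfolding path_in_circuit_def by simp
  from this[of 0] this[of 1] this[of 2] this[of 3] this[of 4]
  have edges: "{v0, v1} \<in> ?E" "{v1, v2} \<in> ?E" "{v2, v3} \<in> ?E" "{v3, v4} \<in> ?E" "{v4, v5} \<in> ?E"
    by (simp_all add: eval_nat_numeral)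
  have oct: "straight_octagon ?E (circ_nth c)" using straight_8_circuit_octagon[OF circ] .
  have "v0 \<in> range (circ_nth c)"
    using in_circ set_subset_range_circ_nth[OF straight_circuit_8D(1,2)[OF circ]]
    unfolding path_in_circuit_def by auto
  then obtain s where s: "v0 = circ_nth c s" by blast
  have "v1 = circ_nth c (s - 1) \<or> v1 = circ_nth c (s + 1)"
    using oct edges(1) unfolding s straight_octagon_def by blast
  then obtain h where oh: "straight_octagon ?E h" and h01: "h 0 = v0" "h 1 = v1"
  proof
    assume "v1 = circ_nth c (s - 1)"
    then show thesis using that[OF straight_octagon_reflect[OF oct, of s]] s by simp
  next
    assume "v1 = circ_nth c (s + 1)"
    then show thesis using that[OF straight_octagon_shift[OF oct, of s]] s by simp
  qed
  have nb: "v0 \<noteq> v2" "v1 \<noteq> v3" "v2 \<noteq> v4" "v3 \<noteq> v5" using path by simp_all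
  have "v2 = h 2" using straight_octagon_next[OF oh, of 1 v2] edges h01 nb by simp
  then have "v3 = h 3" using straight_octagon_next[OF oh, of 2 v3] edges h01 nb by simp
  then have "v4 = h 4" using straight_octagon_next[OF oh, of 3 v4] edges h01 nb \<open>v2 = h 2\<close> by simp
  then have "v5 = h 5" using straight_octagon_next[OF oh, of 4 v5] edges h01 nb \<open>v3 = h 3\<close> by simp
  have adj_h: "adj (h i) (h (i + 1))" and opp_h: "opp (h i) (h (i - 1)) (h (i + 1))" for i
    using oh unfolding straight_octagon_def by blast+
  have "h 8 = h 0" "h (- 1) = h 7" "h 6 \<noteq> h 4" using oh unfolding straight_octagon_def by simp_all
  then show thesis
    using that[of "h 6" "h 7"] adj_h[of 5] adj_h[of 6] adj_h[of 7] opp_h[of 6] opp_h[of 0]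
      h01 \<open>v4 = h 4\<close> \<open>v5 = h 5\<close> by simp
qed

lemma oppositeE:
  assumes "opposite 4 V adj opp u v"
  obtains L x N where "adj u L" "adj L x" "adj x N" "adj N v" "u \<noteq> x" "L \<noteq> N" "x \<noteq> v"
    "opp L u x" "opp x L N" "opp N x v"
proof -
  obtain p where p: "is_path V adj p 4" "straight opp p" "hd p = u" "last p = v"
    using assms unfolding opposite_def by blast
  then have "length p = 5" unfolding is_path_def by simp
  then obtain L x N where "p = [u, L, x, N, v]"
    using p(3,4) by (auto simp: eval_nat_numeral length_Suc_conv)
  with p that show thesis by auto
qed

lemma oppositeI:
  assumes "adj u L" "adj L x" "adj x N" "adj N v" "u \<noteq> x" "L \<noteq> N" "x \<noteq> v"
    and "opp L u x" "opp x L N" "opp N x v"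
  shows "opposite 4 V adj opp u v"
  unfolding opposite_def using assms adj_in_V by (intro exI[of _ "[u, L, x, N, v]"]) simp

lemma opposite_sym: "opposite 4 V adj opp u v \<Longrightarrow> opposite 4 V adj opp v u"
proof -
  assume "opposite 4 V adj opp u v"
  then obtain L x N where "adj u L" "adj L x" "adj x N" "adj N v" "u \<noteq> x" "L \<noteq> N" "x \<noteq> v"
    "opp L u x" "opp x L N" "opp N x v"
    by (rule oppositeE)
  then show "opposite 4 V adj opp v u"
    using adj_sym adj_in_V opp_sym oppositeI[of v N x L u] by metis
qed

lemma walk_gdist:
  assumes "u \<in> V" "v \<in> V"
  obtains xs where "walk V adj xs" "hd xs = u" "last xs = v" "length xs = Suc (gdist V adj u v)"
proof -
  have "connected_graph V adj" using veldkamp_4gon unfolding veldkamp_ngon_def by blast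
  then obtain xs where "walk V adj xs" "hd xs = u" "last xs = v"
    using assms unfolding connected_graph_def by blast
  then have "\<exists>k xs. walk V adj xs \<and> hd xs = u \<and> last xs = v \<and> length xs = Suc k"
    unfolding walk_def by (metis Suc_pred length_greater_0_conv)
  from LeastI_ex[OF this] show thesis
    using that unfolding gdist_def by blast
qed

lemma collinear_sym: "collinear adj u v \<Longrightarrow> collinear adj v u"
  unfolding collinear_def using adj_sym by blast

lemma gdist_le_2_if_collinear: "collinear adj u v \<Longrightarrow> gdist V adj u v \<le> 2"
proof -
  assume "collinear adj u v"
  then obtain T where "adj u T" "adj T v" unfolding collinear_def by blast
  then have "walk V adj [u, T, v]" using adj_in_V by simp
  from gdist_le_walk[OF this] show ?thesis by simp
qed

lemma sphere_2_eq_collinear: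
  assumes "b \<in> P" shows "sphere V adj 2 b = {u. u \<noteq> b \<and> collinear adj u b}"
proof (intro set_eqI iffI)
  fix u assume "u \<in> sphere V adj 2 b"
  then have u: "u \<in> V" "gdist V adj u b = 2" unfolding sphere_def by auto
  then obtain xs where xs: "walk V adj xs" "hd xs = u" "last xs = b" "length xs = 3"
    using walk_gdist assms points_in_V by (metis numeral_3_eq_3 numeral_2_eq_2 subsetD)
  then obtain T where "xs = [u, T, b]" by (auto simp: eval_nat_numeral length_Suc_conv)
  then have "collinear adj u b" using xs(1) unfolding collinear_def by auto
  moreover have "u \<noteq> b" using gdist_le_walk[where xs="[u]"] u by auto
  ultimately show "u \<in> {u. u \<noteq> b \<and> collinear adj u b}" by blast
next
  fix u assume u: "u \<in> {u. u \<noteq> b \<and> collinear adj u b}"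
  then obtain T where T: "adj u T" "adj T b" unfolding collinear_def by blast
  then have "u \<in> P" "u \<in> V" using assms adj_point_iff adj_in_V by blast+
  obtain xs where xs: "walk V adj xs" "hd xs = u" "last xs = b" "length xs = Suc (gdist V adj u b)"
    using walk_gdist \<open>u \<in> V\<close> assms points_in_V by blast
  have "gdist V adj u b \<noteq> 0"
  proof
    assume "gdist V adj u b = 0"
    then have "xs = [u]" using xs by (cases xs) auto
    then show False using xs u by simp
  qed
  moreover have "gdist V adj u b \<noteq> 1"
  proof
    assume "gdist V adj u b = 1"
    then obtain y where "xs = [u, y]" "y = b" using xs by (auto simp: length_Suc_conv)
    then show False using xs(1) \<open>u \<in> P\<close> assms adj_point_iff by auto
  qed
  ultimately have "gdist V adj u b = 2" using gdist_le_2_if_collinear u by fastforce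
  then show "u \<in> sphere V adj 2 b" unfolding sphere_def using \<open>u \<in> V\<close> by blast
qed

lemma straight_6_path_ends_opposite:
  assumes path: "is_path V adj [v0, v1, v2, v3, v4, v5, v6] 6" and str: "straight opp [v0, v1, v2, v3, v4, v5, v6]"
    and v0P: "v0 \<in> P" and not_coll: "\<not> collinear adj v0 v6"
  shows "opposite 4 V adj opp v0 v6"
proof -
  have "is_path V adj [v0, v1, v2, v3, v4, v5] 5" "straight opp [v0, v1, v2, v3, v4, v5]"
    using path str by simp_all
  then obtain u U where v5u: "adj v5 u" and uU: "adj u U" and Uv0: "adj U v0" and ouv5U: "opp u v5 U"
    by (rule straight_5_path_closes)
  have v5v6: "adj v5 v6" using path by simp
  have "v5 \<notin> P" "U \<notin> P" using path v0P adj_point_iff Uv0 by auto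
  have uV: "u \<in> V" using adj_in_V[OF uU] by blast
  have "u \<noteq> v0" using v5u v5v6 not_coll adj_sym unfolding collinear_def by blast
  moreover have "u \<noteq> v6" using uU Uv0 not_coll adj_sym unfolding collinear_def by blast
  moreover have "U \<noteq> v5" using opp_neq[OF uV ouv5U] by blast
  ultimately show ?thesis
    using adj_sym[OF Uv0] adj_sym[OF uU] adj_sym[OF v5u] v5v6 opp_sym[OF uV ouv5U]
      opp_at_line[OF Uv0 adj_sym[OF uU] \<open>U \<notin> P\<close>] opp_at_line[OF v5u v5v6 \<open>v5 \<notin> P\<close>]
    by (intro oppositeI[of v0 U u v5 v6]) auto
qed

lemma ex_point_collinear_on_line_through:
  assumes aP: "a \<in> P" and not_coll: "\<not> collinear adj a b"
    and aL: "adj a L" and Lx: "adj L x" and xM: "adj x M" and Mb: "adj M b"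
    and oK: "opp a K L" and Kc: "adj K c" and ca: "c \<noteq> a"
  obtains S c' T where "adj S c" "opp c S K" "adj S c'" "adj c' T" "adj T b" "opp c' S T"
proof -
  have aV: "a \<in> V" using aP points_in_V by blast
  have aK: "adj a K" using opp_adj[OF aV oK] by blast
  have LP: "L \<notin> P" and xP: "x \<in> P" and MP: "M \<notin> P" and KP: "K \<notin> P"
    using aP adj_point_iff aL Lx xM aK by blast+
  have ax: "a \<noteq> x" using not_coll xM Mb unfolding collinear_def by blast
  have xb: "x \<noteq> b" using not_coll aL Lx unfolding collinear_def by blast
  have xV: "x \<in> V" using xP points_in_V by blast
  obtain N where xN: "adj x N" and oNL: "opp x N L" and oNM: "opp x N M"
    using ex_opp_both[OF adj_sym[OF Lx] xM] by blast
  have NP: "N \<notin> P" using adj_point_iff[OF xN] xP by simp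
  have KL: "K \<noteq> L" and LN: "L \<noteq> N" and MN: "M \<noteq> N"
    using opp_neq[OF aV oK] opp_neq[OF xV oNL] opp_neq[OF xV oNM] by auto
  have "is_path V adj [c, K, a, L, x, N] 5" "straight opp [c, K, a, L, x, N]"
    using adj_in_V[OF Kc] adj_in_V[OF aL] adj_in_V[OF xN] adj_sym[OF Kc] adj_sym[OF aK] aL Lx xN ca KL ax LN
      opp_at_line[OF Kc adj_sym[OF aK] KP ca] oK opp_at_line[OF adj_sym[OF aL] Lx LP ax] opp_sym[OF xV oNL]
    by simp_all
  then obtain y S where Ny: "adj N y" and yS: "adj y S" and Sc: "adj S c" and oyNS: "opp y N S"
    and ocSK: "opp c S K" and yx: "y \<noteq> x"
    by (rule straight_5_path_closes)
  have yP: "y \<in> P" using adj_point_iff Ny NP by blast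
  have yV: "y \<in> V" using yP points_in_V by blast
  have NS: "N \<noteq> S" using opp_neq[OF yV oyNS] .
  have "is_path V adj [b, M, x, N, y, S] 5" "straight opp [b, M, x, N, y, S]"
    using adj_in_V[OF Mb] adj_in_V[OF xN] adj_in_V[OF yS] adj_sym[OF Mb] adj_sym[OF xM] xN Ny yS xb MN yx NS
      opp_at_line[OF Mb adj_sym[OF xM] MP] xb opp_sym[OF xV oNM] opp_at_line[OF adj_sym[OF xN] Ny NP] yx oyNS
    by auto
  then obtain c' T where "adj S c'" "adj c' T" "adj T b" "opp c' S T"
    by (rule straight_5_path_closes)
  with Sc ocSK that show thesis by blast
qed

(* The line S and the point c' come from closing c-K-a-L-x-N and then b-M-x-N-y-S; unless c' is
   c or b, the path a-K-c-S-c'-T-b is straight. *)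
lemma point_on_opposite_line_collinear:
  assumes aP: "a \<in> P" and not_coll: "\<not> collinear adj a b"
    and not_opp: "\<not> opposite 4 V adj opp a b"
    and aL: "adj a L" and Lx: "adj L x" and xM: "adj x M" and Mb: "adj M b"
    and oK: "opp a K L" and Kc: "adj K c" and ca: "c \<noteq> a"
  shows "collinear adj c b"
proof (rule ccontr)
  assume not_cb: "\<not> collinear adj c b"
  obtain S c' T where Sc: "adj S c" and ocSK: "opp c S K" and Sc': "adj S c'" and c'T: "adj c' T"
    and Tb: "adj T b" and oc'ST: "opp c' S T"
    using ex_point_collinear_on_line_through[OF aP not_coll aL Lx xM Mb oK Kc ca] by blast
  have aV: "a \<in> V" and cV: "c \<in> V" and c'V: "c' \<in> V"
    using aP points_in_V adj_in_V[OF Kc] adj_in_V[OF Sc'] by blast+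
  have aK: "adj a K" using opp_adj[OF aV oK] by blast
  have KP: "K \<notin> P" and SP: "S \<notin> P" and TP: "T \<notin> P" using aP adj_point_iff aK Kc Sc Sc' c'T by blast+
  have "c' \<noteq> c" "c' \<noteq> b" using not_cb c'T Tb Sc Sc' adj_sym unfolding collinear_def by blast+
  moreover have "S \<noteq> K" "S \<noteq> T" using opp_neq[OF cV ocSK] opp_neq[OF c'V oc'ST] by auto
  ultimately have "is_path V adj [a, K, c, S, c', T, b] 6" "straight opp [a, K, c, S, c', T, b]"
    using adj_in_V[OF aK] adj_in_V[OF Sc] adj_in_V[OF c'T] adj_in_V[OF Tb] aK Kc adj_sym[OF Sc] Sc' c'T Tb ca
      opp_at_line[OF adj_sym[OF aK] Kc KP] opp_sym[OF cV ocSK] opp_at_line[OF Sc Sc' SP] oc'ST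
      opp_at_line[OF adj_sym[OF c'T] Tb TP]
    by auto
  with not_opp show False using straight_6_path_ends_opposite aP not_coll by blast
qed

(* A line K' through a opposite to both K and L lets the previous lemma be applied twice. *)
lemma collinear_point_collinear:
  assumes aP: "a \<in> P" and not_coll: "\<not> collinear adj a b"
    and not_opp: "\<not> opposite 4 V adj opp a b"
    and aL: "adj a L" and Lx: "adj L x" and xM: "adj x M" and Mb: "adj M b"
    and ca: "collinear adj c a" "c \<noteq> a"
  shows "collinear adj c b"
proof -
  obtain K where cK: "adj c K" and Ka: "adj K a" using ca unfolding collinear_def by blast
  obtain K' where aK': "adj a K'" and oK'K: "opp a K' K" and oK'L: "opp a K' L"
    using ex_opp_both[OF adj_sym[OF Ka] aL] by blast
  have aV: "a \<in> V" and K'V: "K' \<in> V" using adj_in_V[OF aK'] by blast+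
  obtain c' where K'c': "adj K' c'" and oc'a: "opp K' c' a"
    using ex_opp_both[OF adj_sym[OF aK'] adj_sym[OF aK']] by blast
  have "c' \<noteq> a" using opp_neq[OF K'V oc'a] .
  then have "collinear adj c' b"
    by (rule point_on_opposite_line_collinear[OF aP not_coll not_opp aL Lx xM Mb oK'L K'c'])
  then obtain T where c'T: "adj c' T" and Tb: "adj T b" unfolding collinear_def by blast
  show ?thesis
    by (rule point_on_opposite_line_collinear[OF aP not_coll not_opp aK' K'c' c'T Tb
          opp_sym[OF aV oK'K] adj_sym[OF cK] ca(2)])
qed

lemma opposite_not_collinear:
  assumes uP: "u \<in> P" and uv: "opposite 4 V adj opp u v" shows "\<not> collinear adj u v"
proof
  assume "collinear adj u v"
  then obtain R where uR: "adj u R" and Rv: "adj R v" unfolding collinear_def by blast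
  obtain L x N where h: "adj u L" "adj L x" "adj x N" "adj N v" "u \<noteq> x" "L \<noteq> N" "x \<noteq> v"
    "opp L u x" "opp x L N" "opp N x v"
    using uv by (rule oppositeE)
  have "u \<noteq> v" using no_4_cycle[OF h(1-3)] h(4-6) by blast
  have vV: "v \<in> V" and uV: "u \<in> V" using adj_in_V[OF Rv] adj_in_V[OF uR] by blast+
  obtain R' where vR': "adj v R'" and oR'N: "opp v R' N" and oR'R: "opp v R' R"
    using ex_opp_both[OF adj_sym[OF h(4)] adj_sym[OF Rv]] by blast
  have "N \<noteq> R'" "R \<noteq> R'" using opp_neq[OF vV oR'N] opp_neq[OF vV oR'R] by auto
  have "is_path V adj [u, L, x, N, v, R'] 5" "straight opp [u, L, x, N, v, R']"
    using h vR' adj_in_V[OF vR'] adj_in_V[OF h(1)] adj_in_V[OF h(3)] \<open>N \<noteq> R'\<close> opp_sym[OF vV oR'N] by auto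
  then obtain w W where R'w: "adj R' w" and wW: "adj w W" and Wu: "adj W u" and owR'W: "opp w R' W"
    and "w \<noteq> v"
    by (rule straight_5_path_closes)
  have wV: "w \<in> V" using adj_in_V[OF wW] by blast
  have RP: "R \<notin> P" and WP: "W \<notin> P" using adj_point_iff uR Wu uP by blast+
  have "u \<noteq> w" using no_4_cycle[OF uR Rv vR'] R'w \<open>u \<noteq> v\<close> \<open>R \<noteq> R'\<close> by blast
  have "W \<noteq> R'" using opp_neq[OF wV owR'W] by simp
  have p: "is_path V adj [u, R, v, R'] 3" "straight opp [u, R, v, R']"
    using uR Rv vR' adj_in_V[OF Rv] adj_in_V[OF vR'] uV \<open>u \<noteq> v\<close> \<open>R \<noteq> R'\<close>
      opp_at_line[OF adj_sym[OF uR] Rv RP \<open>u \<noteq> v\<close>] opp_sym[OF vV oR'R] by auto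
  have q: "is_path V adj [u, W, w, R'] 3" "straight opp [u, W, w, R']"
    using adj_sym[OF Wu] adj_sym[OF wW] adj_sym[OF R'w] adj_in_V[OF wW] adj_in_V[OF R'w] uV \<open>u \<noteq> w\<close>
      \<open>W \<noteq> R'\<close> opp_at_line[OF Wu adj_sym[OF wW] WP \<open>u \<noteq> w\<close>] opp_sym[OF wV owR'W] by auto
  have "[u, W, w, R'] = [u, R, v, R']" using straight_path_unique[OF p _ _ q] by simp
  with \<open>w \<noteq> v\<close> show False by simp
qed

lemma opposite_transfer:
  assumes aP: "a \<in> P" and bP: "b \<in> P" and not_opp: "\<not> opposite 4 V adj opp a b"
    and spheres: "sphere V adj 2 a = sphere V adj 2 b"
    and ay: "opposite 4 V adj opp a y"
  shows "opposite 4 V adj opp b y"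
proof (rule ccontr)
  assume not_by: "\<not> opposite 4 V adj opp b y"
  have same_sphere: "u \<noteq> a \<and> collinear adj u a \<longleftrightarrow> u \<noteq> b \<and> collinear adj u b" for u
    using spheres sphere_2_eq_collinear[OF aP] sphere_2_eq_collinear[OF bP] by blast
  obtain L x N where h: "adj a L" "adj L x" "adj x N" "adj N y" "a \<noteq> x" "L \<noteq> N" "x \<noteq> y"
    "opp L a x" "opp x L N" "opp N x y"
    using ay by (rule oppositeE)
  have LP: "L \<notin> P" using adj_point_iff h(1) aP by blast
  have LV: "L \<in> V" using adj_in_V[OF h(1)] by blast
  have "x \<noteq> a \<and> collinear adj x a" using h adj_sym unfolding collinear_def by blast
  then obtain M where xM: "adj x M" and Mb: "adj M b" using same_sphere unfolding collinear_def by blast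
  have "\<not> collinear adj b y"
  proof
    assume "collinear adj b y"
    moreover have "y \<noteq> b" using ay not_opp by blast
    ultimately have "collinear adj y a"
      using same_sphere adj_sym unfolding collinear_def by blast
    then show False using opposite_not_collinear[OF aP ay] adj_sym unfolding collinear_def by blast
  qed
  obtain c where Lc: "adj L c" and oca: "opp L c a" and ocx: "opp L c x"
    using ex_opp_both[OF adj_sym[OF h(1)] h(2)] by blast
  have "c \<noteq> a" "c \<noteq> x" using opp_neq[OF LV oca] opp_neq[OF LV ocx] by auto
  have cP: "c \<in> P" using adj_point_iff[OF Lc] LP by simp
  have "c \<noteq> a \<and> collinear adj c a" using \<open>c \<noteq> a\<close> Lc h(1) adj_sym unfolding collinear_def by blast
  then have "c \<noteq> b \<and> collinear adj c b" using same_sphere by blast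
  then have "collinear adj c y"
    using collinear_point_collinear[OF bP \<open>\<not> collinear adj b y\<close> not_by adj_sym[OF Mb] adj_sym[OF xM] h(3,4)]
      adj_sym unfolding collinear_def by blast
  moreover have "opposite 4 V adj opp c y"
    using adj_sym[OF Lc] h \<open>c \<noteq> x\<close> ocx by (intro oppositeI[of c L x N y]) auto
  ultimately show False using opposite_not_collinear[OF cP] by blast
qed

lemma sphere_2_subset:
  assumes aP: "a \<in> P" and bP: "b \<in> P" and not_coll: "\<not> collinear adj a b"
    and not_opp: "\<not> opposite 4 V adj opp a b"
    and "adj a L" "adj L x" "adj x M" "adj M b"
  shows "sphere V adj 2 a \<subseteq> sphere V adj 2 b"
  using collinear_point_collinear[OF aP not_coll not_opp assms(5-)] not_coll collinear_sym
  unfolding sphere_2_eq_collinear[OF aP] sphere_2_eq_collinear[OF bP] by blast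

end

theorem proposition3p7:
  fixes V :: "'v set" and adj :: "'v \<Rightarrow> 'v \<Rightarrow> bool" and opp :: "'v \<Rightarrow> 'v \<Rightarrow> 'v \<Rightarrow> bool"
    and P :: "'v set" and a b :: 'v
  assumes "green_quadrangle V adj opp P"
    and "a \<in> P" and "b \<in> P"
    and "gdist V adj a b = 4"
    and "\<not> opposite 4 V adj opp a b"
  shows "opp_set 4 V adj opp a = opp_set 4 V adj opp b \<and> sphere V adj 2 a = sphere V adj 2 b"
proof -
  interpret green_quad V adj opp P using assms(1) by unfold_locales
  note aP = assms(2) and bP = assms(3) and not_opp_ab = assms(5)
  have "a \<in> V" "b \<in> V" using aP bP points_in_V by blast+
  then obtain xs where "walk V adj xs" "hd xs = a" "last xs = b" "length xs = Suc 4"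
    using walk_gdist assms(4) by metis
  then obtain L x M where path: "adj a L" "adj L x" "adj x M" "adj M b"
    by (auto simp: eval_nat_numeral length_Suc_conv)
  have not_coll_ab: "\<not> collinear adj a b"
    using gdist_le_2_if_collinear assms(4) by fastforce
  then have not_coll_ba: "\<not> collinear adj b a" using collinear_sym by blast
  have not_opp_ba: "\<not> opposite 4 V adj opp b a" using not_opp_ab opposite_sym by blast
  have spheres: "sphere V adj 2 a = sphere V adj 2 b"
    using sphere_2_subset[OF aP bP not_coll_ab not_opp_ab path]
      sphere_2_subset[OF bP aP not_coll_ba not_opp_ba adj_sym[OF path(4)] adj_sym[OF path(3)]
        adj_sym[OF path(2)] adj_sym[OF path(1)]]
    by (rule subset_antisym)
  then have "opp_set 4 V adj opp a = opp_set 4 V adj opp b"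
    using opposite_transfer[OF aP bP not_opp_ab] opposite_transfer[OF bP aP not_opp_ba]
    unfolding opp_set_def by blast
  with spheres show ?thesis by blast
qed

end
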